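(* Let $k\ge 2$ and $s\ge 1$ be integers, and let $r_1,\ldots,r_s$ be integers with $0\le r_i\le k$ and $r_i\ne 1$ for each $i\in\{1,\ldots,s\}$. Let $D$ be a strongly connected digraph such that every (directed) cycle of $D$ has length congruent to $r$ modulo $k$ for some $r\in\{r_1,\ldots,r_s\}$. Then $\chi_A(D)\le 2s+1$.
   Context: Digraphs are finite and loopless; paths and cycles are directed. A set of vertices of a digraph $D$ is acyclic if the subdigraph it induces contains no directed cycle. The dichromatic number $\chi_A(D)$ is the minimum $k$ such that $V(D)$ can be colored with $k$ colors so that every color class is acyclic. A digraph is strongly connected if for every ordered pair of distinct vertices $u,v$ there is a directed $uv$-path. *)

theory Defs
  imports Main
begin

text \<open>A (finite, loopless) digraph with vertex set V and arc set A.
  Multiple arcs are irrelevant for cycles/colourings, so arcs form a relation.\<close>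
definition digraph :: "'a set \<Rightarrow> ('a \<times> 'a) set \<Rightarrow> bool" where
  "digraph V A \<longleftrightarrow> finite V \<and> A \<subseteq> V \<times> V \<and> (\<forall>v. (v, v) \<notin> A)"

definition is_dicycle :: "('a \<times> 'a) set \<Rightarrow> 'a list \<Rightarrow> bool" where
  "is_dicycle A C \<longleftrightarrow> length C \<ge> 2 \<and> distinct C \<and>
     (\<forall>i < length C. (C ! i, C ! ((i + 1) mod length C)) \<in> A)"

definition acyclic_set :: "('a \<times> 'a) set \<Rightarrow> 'a set \<Rightarrow> bool" where
  "acyclic_set A S \<longleftrightarrow> \<not> (\<exists>C. is_dicycle A C \<and> set C \<subseteq> S)"

definition dichromatic_number :: "'a set \<Rightarrow> ('a \<times> 'a) set \<Rightarrow> nat" where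
  "dichromatic_number V A = (LEAST n. \<exists>c :: 'a \<Rightarrow> nat. c ` V \<subseteq> {..<n} \<and>
      (\<forall>j. acyclic_set A {v \<in> V. c v = j}))"

definition strongly_connected :: "'a set \<Rightarrow> ('a \<times> 'a) set \<Rightarrow> bool" where
  "strongly_connected V A \<longleftrightarrow> (\<forall>u \<in> V. \<forall>v \<in> V. u \<noteq> v \<longrightarrow> (u, v) \<in> A\<^sup>*)"

end

theory Submission
  imports Defs "HOL-Number_Theory.Cong"
begin

text \<open>Every finite digraph admits a levelling \<open>h\<close> of its vertices (essentially the depths
  of a depth-first search) such that each directed cycle contains an arc \<open>u \<rightarrow> w\<close> with
  \<open>h w < h u\<close> for which \<open>h u - h w + 1\<close> is again the length of a cycle. Colour \<open>v\<close> by
  \<open>g (h v mod k)\<close>, where \<open>g\<close> properly colours the graph on \<open>\<int>/k\<close> joining \<open>a\<close> to \<open>b\<close>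
  when \<open>b + 1 \<equiv> a + r\<^sub>j\<close>. On a monochromatic cycle the arc \<open>u \<rightarrow> w\<close> would give
  \<open>h u + 1 \<equiv> h w + r\<^sub>j (mod k)\<close>, i.e. an edge between the classes of \<open>h w\<close> and \<open>h u\<close>.
  That graph is loopless because \<open>r\<^sub>j \<not>\<equiv> 1\<close>, and has maximum degree at most \<open>2s\<close>, so
  \<open>2s + 1\<close> colours suffice greedily.\<close>

definition dipath :: "('a \<times> 'a) set \<Rightarrow> 'a list \<Rightarrow> bool" where
  "dipath A P \<longleftrightarrow> P \<noteq> [] \<and> distinct P \<and> (\<forall>i. Suc i < length P \<longrightarrow> (P ! i, P ! Suc i) \<in> A)"

definition level_paths :: "('a \<times> 'a) set \<Rightarrow> 'a set \<Rightarrow> 'a set \<Rightarrow> ('a \<Rightarrow> nat) \<Rightarrow> bool" where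
  "level_paths A V N h \<longleftrightarrow>
    (\<forall>x\<in>V. \<exists>P. dipath A P \<and> set P \<subseteq> V \<and> hd P \<in> N \<and> last P = x \<and> length P = Suc (h x))"

definition dicycle_length :: "('a \<times> 'a) set \<Rightarrow> nat \<Rightarrow> bool" where
  "dicycle_length A n \<longleftrightarrow> (\<exists>C. is_dicycle A C \<and> length C = n)"

definition cycle_descent :: "('a \<times> 'a) set \<Rightarrow> 'a set \<Rightarrow> ('a \<Rightarrow> nat) \<Rightarrow> bool" where
  "cycle_descent A V h \<longleftrightarrow>
    (\<forall>C. is_dicycle A C \<and> set C \<subseteq> V \<longrightarrow>
       (\<exists>i<length C. h (C ! ((i + 1) mod length C)) < h (C ! i) \<and>
          dicycle_length A (h (C ! i) - h (C ! ((i + 1) mod length C)) + 1)))"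

lemma dipath_Cons:
  assumes "dipath A P" "r \<notin> set P" "(r, hd P) \<in> A"
  shows "dipath A (r # P)"
  unfolding dipath_def
proof (intro conjI allI impI)
  show "distinct (r # P)" using assms unfolding dipath_def by auto
  fix i assume i: "Suc i < length (r # P)"
  show "((r # P) ! i, (r # P) ! Suc i) \<in> A"
  proof (cases i)
    case 0 then show ?thesis using assms by (auto simp: dipath_def hd_conv_nth)
  next
    case (Suc j) then show ?thesis using assms i by (auto simp: dipath_def)
  qed
qed simp

lemma is_dicycle_Cons:
  assumes "dipath A P" "r \<notin> set P" "(r, hd P) \<in> A" "(last P, r) \<in> A"
  shows "is_dicycle A (r # P)"
proof -
  have path: "dipath A (r # P)" using dipath_Cons assms by metis
  have ne: "P \<noteq> []" using assms unfolding dipath_def by auto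
  show ?thesis unfolding is_dicycle_def
  proof (intro conjI allI impI)
    show "2 \<le> length (r # P)" using ne by (cases P) auto
    show "distinct (r # P)" using path unfolding dipath_def by auto
    fix i assume i: "i < length (r # P)"
    show "((r # P) ! i, (r # P) ! ((i + 1) mod length (r # P))) \<in> A"
    proof (cases "Suc i < length (r # P)")
      case True
      then show ?thesis using path unfolding dipath_def by auto
    next
      case False
      then have "i = length P" using i by simp
      then show ?thesis using assms ne by (simp add: last_conv_nth)
    qed
  qed
qed

lemma dicycle_subset_closed:
  assumes "is_dicycle A C" "set C \<subseteq> V" "set C \<inter> X \<noteq> {}"
    and closed: "\<forall>u\<in>X. \<forall>v\<in>V. (u, v) \<in> A \<longrightarrow> v \<in> X"
  shows "set C \<subseteq> X"
proof
  let ?L = "length C"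
  obtain a where a: "a < ?L" "C ! a \<in> X" using assms(3) by (metis disjoint_iff in_set_conv_nth)
  then have L: "0 < ?L" by linarith
  have walk: "C ! ((a + m) mod ?L) \<in> X" for m
  proof (induction m)
    case 0 then show ?case using a by simp
  next
    case (Suc m)
    let ?p = "(a + m) mod ?L"
    have p: "?p < ?L" using L by simp
    have "(C ! ?p, C ! ((?p + 1) mod ?L)) \<in> A" using assms(1) p unfolding is_dicycle_def by blast
    moreover have "(?p + 1) mod ?L = (a + Suc m) mod ?L" by (simp add: mod_Suc_eq)
    moreover have "C ! ((a + Suc m) mod ?L) \<in> V" using L assms(2) by (simp add: subset_code(1))
    ultimately show ?case using Suc closed by metis
  qed
  fix w assume "w \<in> set C"
  then obtain b where b: "b < ?L" "C ! b = w" by (metis in_set_conv_nth)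
  have "(a + (?L - a + b)) mod ?L = b" using a(1) b(1) by simp
  then show "w \<in> X" using walk[of "?L - a + b"] b(2) by simp
qed

lemma rtrancl_first_step_avoiding:
  assumes "(r, x) \<in> R\<^sup>*" "x \<noteq> r"
  shows "\<exists>n. n \<noteq> r \<and> (r, n) \<in> R \<and> (n, x) \<in> (R \<inter> (-{r}) \<times> (-{r}))\<^sup>*"
  using assms
proof (induction rule: rtrancl_induct)
  case base then show ?case by simp
next
  case (step y z)
  show ?case
  proof (cases "y = r")
    case True then show ?thesis using step by auto
  next
    case False
    then obtain n where "n \<noteq> r" "(r, n) \<in> R" "(n, y) \<in> (R \<inter> (-{r}) \<times> (-{r}))\<^sup>*"
      using step by blast
    moreover have "(y, z) \<in> R \<inter> (-{r}) \<times> (-{r})" using step False by auto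
    ultimately show ?thesis by (meson rtrancl_into_rtrancl)
  qed
qed

lemma rtrancl_within_reachable:
  assumes "(r, x) \<in> R\<^sup>*"
  shows "(r, x) \<in> (R \<inter> R\<^sup>* `` {r} \<times> R\<^sup>* `` {r})\<^sup>*"
  using assms
proof (induction rule: rtrancl_induct)
  case base then show ?case by simp
next
  case (step y z)
  then have "(y, z) \<in> R \<inter> R\<^sup>* `` {r} \<times> R\<^sup>* `` {r}" by (auto intro: rtrancl_into_rtrancl)
  then show ?case using step by (meson rtrancl_into_rtrancl)
qed

lemma rtrancl_outside_closed:
  assumes "(a, y) \<in> R\<^sup>*" "y \<notin> X" "\<And>u v. u \<in> X \<Longrightarrow> (u, v) \<in> R \<Longrightarrow> v \<in> X"
  shows "a \<notin> X \<and> (a, y) \<in> (R \<inter> (-X) \<times> (-X))\<^sup>*"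
  using assms(1)
proof (induction rule: converse_rtrancl_induct)
  case base then show ?case using assms(2) by simp
next
  case (step a b)
  then have "a \<notin> X" using assms(3) by blast
  then have "(a, b) \<in> R \<inter> (-X) \<times> (-X)" using step by auto
  then show ?case using step \<open>a \<notin> X\<close> by (meson converse_rtrancl_into_rtrancl)
qed

lemma reachable_from_out_neighbours:
  assumes "\<forall>x\<in>V. (r, x) \<in> (A \<inter> V \<times> V)\<^sup>*"
  shows "\<forall>x\<in>V - {r}. \<exists>n\<in>{n \<in> V - {r}. (r, n) \<in> A}. (n, x) \<in> (A \<inter> (V - {r}) \<times> (V - {r}))\<^sup>*"
proof
  fix x assume x: "x \<in> V - {r}"
  then obtain n where n: "n \<noteq> r" "(r, n) \<in> A \<inter> V \<times> V"
      "(n, x) \<in> (A \<inter> V \<times> V \<inter> (-{r}) \<times> (-{r}))\<^sup>*"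
    using assms rtrancl_first_step_avoiding[of r x "A \<inter> V \<times> V"] by blast
  moreover have "A \<inter> V \<times> V \<inter> (-{r}) \<times> (-{r}) = A \<inter> (V - {r}) \<times> (V - {r})" by auto
  ultimately show "\<exists>n\<in>{n \<in> V - {r}. (r, n) \<in> A}. (n, x) \<in> (A \<inter> (V - {r}) \<times> (V - {r}))\<^sup>*"
    by auto
qed

lemma reachable_outside_closed:
  assumes "\<forall>x\<in>V. \<exists>n\<in>N. (n, x) \<in> (A \<inter> V \<times> V)\<^sup>*"
    and closed: "\<forall>u\<in>X. \<forall>v\<in>V. (u, v) \<in> A \<longrightarrow> v \<in> X"
  shows "\<forall>y\<in>V - X. \<exists>n\<in>N - X. (n, y) \<in> (A \<inter> (V - X) \<times> (V - X))\<^sup>*"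
proof
  fix y assume y: "y \<in> V - X"
  then obtain n where n: "n \<in> N" "(n, y) \<in> (A \<inter> V \<times> V)\<^sup>*" using assms(1) by blast
  then have "n \<notin> X \<and> (n, y) \<in> (A \<inter> V \<times> V \<inter> (-X) \<times> (-X))\<^sup>*"
    using rtrancl_outside_closed[OF n(2)] y closed by blast
  moreover have "A \<inter> V \<times> V \<inter> (-X) \<times> (-X) = A \<inter> (V - X) \<times> (V - X)" by auto
  ultimately show "\<exists>n\<in>N - X. (n, y) \<in> (A \<inter> (V - X) \<times> (V - X))\<^sup>*"
    using n by auto
qed

subsection \<open>Existence of a levelling\<close>

text \<open>A cycle through the root \<open>r\<close> enters \<open>r\<close> from some \<open>u\<close>; the level path of \<open>u\<close>
  starts at an out-neighbour of \<open>r\<close>, so together with \<open>r\<close> it closes a cycle of length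
  \<open>h u + 1 = h u - h r + 1\<close>.\<close>

lemma levelling_delete_root:
  fixes r :: 'a and h' :: "'a \<Rightarrow> nat"
  defines "h \<equiv> \<lambda>x. if x = r then 0 else Suc (h' x)"
  assumes root: "r \<in> N" "r \<in> V"
    and paths: "level_paths A (V - {r}) {n \<in> V - {r}. (r, n) \<in> A} h'"
    and descent: "cycle_descent A (V - {r}) h'"
  shows "level_paths A V N h" "cycle_descent A V h"
proof -
  show "level_paths A V N h" unfolding level_paths_def
  proof
    fix x assume x: "x \<in> V"
    show "\<exists>P. dipath A P \<and> set P \<subseteq> V \<and> hd P \<in> N \<and> last P = x \<and> length P = Suc (h x)"
    proof (cases "x = r")
      case True
      then show ?thesis using root by (intro exI[of _ "[r]"]) (auto simp: dipath_def h_def)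
    next
      case False
      then obtain P where P: "dipath A P" "set P \<subseteq> V - {r}" "hd P \<in> V - {r}" "(r, hd P) \<in> A"
          "last P = x" "length P = Suc (h' x)"
        using paths x unfolding level_paths_def by blast
      then have "dipath A (r # P)" by (intro dipath_Cons) auto
      then show ?thesis using P False root
        by (intro exI[of _ "r # P"]) (auto simp: h_def dipath_def)
    qed
  qed
  show "cycle_descent A V h" unfolding cycle_descent_def
  proof (intro allI impI)
    fix C assume C: "is_dicycle A C \<and> set C \<subseteq> V"
    let ?L = "length C"
    show "\<exists>i<?L. h (C ! ((i + 1) mod ?L)) < h (C ! i) \<and>
        dicycle_length A (h (C ! i) - h (C ! ((i + 1) mod ?L)) + 1)"
    proof (cases "r \<in> set C")
      case False
      then obtain i where i: "i < ?L" "h' (C ! ((i + 1) mod ?L)) < h' (C ! i)"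
          "dicycle_length A (h' (C ! i) - h' (C ! ((i + 1) mod ?L)) + 1)"
        using descent C unfolding cycle_descent_def by blast
      have "(i + 1) mod ?L < ?L" by (rule mod_less_divisor) (use i(1) in linarith)
      then have "C ! i \<noteq> r" "C ! ((i + 1) mod ?L) \<noteq> r" using False i(1) nth_mem by metis+
      then show ?thesis using i by (intro exI[of _ i]) (auto simp: h_def)
    next
      case True
      then obtain j where j: "j < ?L" "C ! j = r" by (metis in_set_conv_nth)
      have L2: "?L \<ge> 2" using C by (simp add: is_dicycle_def)
      define i where "i = (if j = 0 then ?L - 1 else j - 1)"
      have i: "i < ?L" "(i + 1) mod ?L = j" "i \<noteq> j" using j L2 by (auto simp: i_def)
      have u: "C ! i \<noteq> r" using i j C by (metis is_dicycle_def nth_eq_iff_index_eq)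
      then obtain P where P: "dipath A P" "set P \<subseteq> V - {r}" "hd P \<in> V - {r}" "(r, hd P) \<in> A"
          "last P = C ! i" "length P = Suc (h' (C ! i))"
        using paths C i(1) nth_mem unfolding level_paths_def by blast
      have "(C ! i, r) \<in> A" using C i j by (auto simp: is_dicycle_def)
      then have "is_dicycle A (r # P)" using P by (intro is_dicycle_Cons) auto
      then show ?thesis using i j u P
        by (intro exI[of _ i]) (auto simp: h_def dicycle_length_def)
    qed
  qed
qed

lemma levelling_split_closed:
  fixes X :: "'a set" and hX hY :: "'a \<Rightarrow> nat"
  defines "h \<equiv> \<lambda>x. if x \<in> X then hX x else hY x"
  assumes "X \<subseteq> V" and closed: "\<forall>u\<in>X. \<forall>v\<in>V. (u, v) \<in> A \<longrightarrow> v \<in> X"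
    and "NX \<subseteq> N" "NY \<subseteq> N"
    and paths: "level_paths A X NX hX" "level_paths A (V - X) NY hY"
    and descent: "cycle_descent A X hX" "cycle_descent A (V - X) hY"
  shows "level_paths A V N h" "cycle_descent A V h"
proof -
  show "level_paths A V N h" unfolding level_paths_def
  proof
    fix x assume x: "x \<in> V"
    show "\<exists>P. dipath A P \<and> set P \<subseteq> V \<and> hd P \<in> N \<and> last P = x \<and> length P = Suc (h x)"
    proof (cases "x \<in> X")
      case True
      then show ?thesis using paths(1) \<open>X \<subseteq> V\<close> \<open>NX \<subseteq> N\<close>
        unfolding level_paths_def h_def by fastforce
    next
      case False
      then show ?thesis using paths(2) x \<open>NY \<subseteq> N\<close> unfolding level_paths_def h_def by fastforce
    qed
  qed
  show "cycle_descent A V h" unfolding cycle_descent_def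
  proof (intro allI impI)
    fix C assume C: "is_dicycle A C \<and> set C \<subseteq> V"
    let ?L = "length C"
    have next_in: "C ! i \<in> set C" "C ! ((i + 1) mod ?L) \<in> set C" if "i < ?L" for i
    proof -
      have "(i + 1) mod ?L < ?L" by (rule mod_less_divisor) (use that in linarith)
      then show "C ! i \<in> set C" "C ! ((i + 1) mod ?L) \<in> set C" using that by auto
    qed
    show "\<exists>i<?L. h (C ! ((i + 1) mod ?L)) < h (C ! i) \<and>
        dicycle_length A (h (C ! i) - h (C ! ((i + 1) mod ?L)) + 1)"
    proof (cases "set C \<inter> X = {}")
      case False
      then have "set C \<subseteq> X" using dicycle_subset_closed[of A C V X] C closed by blast
      then obtain i where i: "i < ?L" "hX (C ! ((i + 1) mod ?L)) < hX (C ! i)"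
          "dicycle_length A (hX (C ! i) - hX (C ! ((i + 1) mod ?L)) + 1)"
        using descent(1) C unfolding cycle_descent_def by blast
      moreover have "C ! i \<in> X" "C ! ((i + 1) mod ?L) \<in> X"
        using next_in[OF i(1)] \<open>set C \<subseteq> X\<close> by blast+
      ultimately show ?thesis by (intro exI[of _ i]) (simp add: h_def)
    next
      case True
      then have "set C \<subseteq> V - X" using C by blast
      then obtain i where i: "i < ?L" "hY (C ! ((i + 1) mod ?L)) < hY (C ! i)"
          "dicycle_length A (hY (C ! i) - hY (C ! ((i + 1) mod ?L)) + 1)"
        using descent(2) C unfolding cycle_descent_def by blast
      moreover have "C ! i \<notin> X" "C ! ((i + 1) mod ?L) \<notin> X"
        using next_in[OF i(1)] True by blast+
      ultimately show ?thesis by (intro exI[of _ i]) (simp add: h_def)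
    qed
  qed
qed

text \<open>Induction on \<open>|V|\<close>: pick a root \<open>r \<in> N\<close>. If \<open>r\<close> reaches all of \<open>V\<close>, delete it;
  otherwise split \<open>V\<close> into the set reached from \<open>r\<close>, which no arc leaves, and the rest.\<close>

lemma levelling_exists:
  assumes "finite V" "N \<subseteq> V" "\<forall>x\<in>V. \<exists>n\<in>N. (n, x) \<in> (A \<inter> V \<times> V)\<^sup>*"
  shows "\<exists>h. level_paths A V N h \<and> cycle_descent A V h"
  using assms
proof (induction "card V" arbitrary: V N rule: less_induct)
  case less
  show ?case
  proof (cases "V = {}")
    case True
    then show ?thesis unfolding level_paths_def cycle_descent_def is_dicycle_def by auto
  next
    case False
    then obtain r where r: "r \<in> N" using less.prems(3) by blast
    then have rV: "r \<in> V" using less.prems(2) by blast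
    define X where "X = (A \<inter> V \<times> V)\<^sup>* `` {r}"
    have XV: "X \<subseteq> V" using rV by (auto simp: X_def elim: rtranclE)
    have closed: "\<forall>u\<in>X. \<forall>v\<in>V. (u, v) \<in> A \<longrightarrow> v \<in> X"
      using XV by (auto simp: X_def intro: rtrancl_into_rtrancl)
    show ?thesis
    proof (cases "X = V")
      case True
      have card: "card (V - {r}) < card V" using less.prems(1) rV by (rule card_Diff1_less)
      have "\<forall>x\<in>V. (r, x) \<in> (A \<inter> V \<times> V)\<^sup>*" using True by (auto simp: X_def)
      then obtain h' where "level_paths A (V - {r}) {n \<in> V - {r}. (r, n) \<in> A} h'"
          "cycle_descent A (V - {r}) h'"
        using less.hyps[OF card _ _ reachable_from_out_neighbours] less.prems(1) by blast
      then show ?thesis using levelling_delete_root[OF r rV] by blast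
    next
      case False
      have cardX: "card X < card V" using False XV less.prems(1) by (simp add: psubset_card_mono)
      have cardY: "card (V - X) < card V"
        using rV less.prems(1) by (intro psubset_card_mono) (auto simp: X_def)
      have "A \<inter> V \<times> V \<inter> X \<times> X = A \<inter> X \<times> X" using XV by auto
      then have "\<forall>x\<in>X. \<exists>n\<in>{r}. (n, x) \<in> (A \<inter> X \<times> X)\<^sup>*"
        using rtrancl_within_reachable[of r _ "A \<inter> V \<times> V"] by (auto simp: X_def)
      moreover have "finite X" "{r} \<subseteq> X" using less.prems(1) XV by (auto simp: X_def intro: finite_subset)
      ultimately obtain hX where hX: "level_paths A X {r} hX" "cycle_descent A X hX"
        using less.hyps[OF cardX] by blast
      obtain hY where hY: "level_paths A (V - X) (N - X) hY" "cycle_descent A (V - X) hY"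
        using less.hyps[OF cardY _ _ reachable_outside_closed[OF less.prems(3) closed]]
          less.prems(1,2) by blast
      show ?thesis using levelling_split_closed[OF XV closed _ _ hX(1) hY(1) hX(2) hY(2)] r by blast
    qed
  qed
qed

subsection \<open>Colouring\<close>

lemma greedy_colouring:
  assumes "finite S" "\<forall>a\<in>S. card {b\<in>S. E a b \<or> E b a} \<le> d" "\<forall>a. \<not> E a a"
  shows "\<exists>g. (\<forall>a\<in>S. g a < Suc d) \<and> (\<forall>a\<in>S. \<forall>b\<in>S. E a b \<longrightarrow> g a \<noteq> g b)"
proof -
  have "T \<subseteq> S \<Longrightarrow> \<exists>g. (\<forall>a\<in>T. g a < Suc d) \<and> (\<forall>a\<in>T. \<forall>b\<in>T. E a b \<longrightarrow> g a \<noteq> g b)"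
    if "finite T" for T
    using that
  proof (induction T rule: finite_induct)
    case empty then show ?case by simp
  next
    case (insert x T)
    then obtain g where g: "\<forall>a\<in>T. g a < Suc d" "\<forall>a\<in>T. \<forall>b\<in>T. E a b \<longrightarrow> g a \<noteq> g b" by auto
    define NB where "NB = {b\<in>T. E x b \<or> E b x}"
    have "card NB \<le> card {b\<in>S. E x b \<or> E b x}"
      using insert.prems assms(1) by (intro card_mono) (auto simp: NB_def)
    also have "\<dots> \<le> d" using assms(2) insert.prems by blast
    finally have "card (g ` NB) \<le> d" using card_image_le[of NB g] insert(1) by (simp add: NB_def)
    then have "\<not> {..<Suc d} \<subseteq> g ` NB"
      using card_mono[of "g ` NB" "{..<Suc d}"] insert(1) by (auto simp: NB_def)
    then obtain c where c: "c < Suc d" "c \<notin> g ` NB" by auto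
    have "E a b \<Longrightarrow> (g(x := c)) a \<noteq> (g(x := c)) b" if "a \<in> insert x T" "b \<in> insert x T" for a b
      using that g(2) c(2) assms(3) insert(2) by (auto simp: NB_def)
    then show ?case using g(1) c(1) by (intro exI[of _ "g(x := c)"]) auto
  qed
  then show ?thesis using assms(1) by blast
qed

definition residue_graph :: "nat \<Rightarrow> (nat \<Rightarrow> nat) \<Rightarrow> nat \<Rightarrow> nat \<Rightarrow> nat \<Rightarrow> bool" where
  "residue_graph k r s a b \<longleftrightarrow> (\<exists>j\<in>{1..s}. (b + 1) mod k = (a + r j) mod k)"

lemma residue_graph_irrefl:
  assumes "k \<ge> 2" "\<forall>j\<in>{1..s}. r j \<le> k \<and> r j \<noteq> 1"
  shows "\<not> residue_graph k r s a a"
proof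
  assume "residue_graph k r s a a"
  then obtain j where j: "j \<in> {1..s}" "[a + 1 = a + r j] (mod k)"
    unfolding residue_graph_def cong_def by blast
  then have "[r j = 1] (mod k)" by (metis cong_add_lcancel_nat cong_sym)
  then have "r j mod k = 1" using assms(1) by (simp add: cong_def)
  moreover have "r j \<le> k" "r j \<noteq> 1" using assms(2) j(1) by auto
  ultimately show False by (cases "r j = k") simp_all
qed

lemma residue_graph_degree:
  assumes "k > 0" "\<forall>j\<in>{1..s}. r j \<le> k"
  shows "card {b\<in>{..<k}. residue_graph k r s a b \<or> residue_graph k r s b a} \<le> 2 * s"
proof -
  have "{b\<in>{..<k}. residue_graph k r s a b \<or> residue_graph k r s b a}
      \<subseteq> (\<lambda>j. (a + r j + (k - 1)) mod k) ` {1..s} \<union> (\<lambda>j. (a + 1 + (k - r j)) mod k) ` {1..s}"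
  proof
    fix b assume b: "b \<in> {b\<in>{..<k}. residue_graph k r s a b \<or> residue_graph k r s b a}"
    then have bk: "b < k" by simp
    show "b \<in> (\<lambda>j. (a + r j + (k - 1)) mod k) ` {1..s} \<union> (\<lambda>j. (a + 1 + (k - r j)) mod k) ` {1..s}"
    proof (cases "residue_graph k r s a b")
      case True
      then obtain j where j: "j \<in> {1..s}" "(b + 1) mod k = (a + r j) mod k"
        by (auto simp: residue_graph_def)
      have "b = (b + 1 + (k - 1)) mod k" using bk assms(1) by simp
      also have "\<dots> = (a + r j + (k - 1)) mod k" using j(2) by (metis mod_add_left_eq)
      finally show ?thesis using j(1) by blast
    next
      case False
      then obtain j where j: "j \<in> {1..s}" "(a + 1) mod k = (b + r j) mod k"
        using b by (auto simp: residue_graph_def)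
      have "b = (b + r j + (k - r j)) mod k" using bk assms(2) j(1) by simp
      also have "\<dots> = (a + 1 + (k - r j)) mod k" using j(2) by (metis mod_add_left_eq)
      finally show ?thesis using j(1) by blast
    qed
  qed
  then have "card {b\<in>{..<k}. residue_graph k r s a b \<or> residue_graph k r s b a}
      \<le> card ((\<lambda>j. (a + r j + (k - 1)) mod k) ` {1..s}) + card ((\<lambda>j. (a + 1 + (k - r j)) mod k) ` {1..s})"
    by (meson card_Un_le card_mono finite_UnI finite_atLeastAtMost finite_imageI order_trans)
  also have "\<dots> \<le> s + s" by (intro add_mono) (metis card_atLeastAtMost card_image_le finite_atLeastAtMost diff_Suc_1)+
  finally show ?thesis by simp
qed

lemma acyclic_residue_colour_class:
  assumes descent: "cycle_descent A V h"
    and lengths: "\<forall>C. is_dicycle A C \<longrightarrow> (\<exists>i \<in> {1..s}. length C mod k = r i mod k)"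
    and proper: "\<forall>a<k. \<forall>b<k. residue_graph k r s a b \<longrightarrow> g a \<noteq> g b" and "k > 0"
  shows "acyclic_set A {v \<in> V. g (h v mod k) = c}"
  unfolding acyclic_set_def
proof
  assume "\<exists>C. is_dicycle A C \<and> set C \<subseteq> {v \<in> V. g (h v mod k) = c}"
  then obtain C where C: "is_dicycle A C" "set C \<subseteq> {v \<in> V. g (h v mod k) = c}" by blast
  let ?L = "length C"
  obtain i where i: "i < ?L" "h (C ! ((i + 1) mod ?L)) < h (C ! i)"
      "dicycle_length A (h (C ! i) - h (C ! ((i + 1) mod ?L)) + 1)"
    using descent C unfolding cycle_descent_def by blast
  define u where "u = C ! i"
  define w where "w = C ! ((i + 1) mod ?L)"
  have "(i + 1) mod ?L < ?L" by (rule mod_less_divisor) (use i(1) in linarith)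
  then have same: "g (h u mod k) = c" "g (h w mod k) = c"
    using C(2) i(1) nth_mem by (fastforce simp: u_def w_def)+
  obtain C' where C': "is_dicycle A C'" "h u + 1 = h w + length C'"
    using i(2,3) by (auto simp: u_def w_def dicycle_length_def)
  obtain j where j: "j \<in> {1..s}" "length C' mod k = r j mod k" using lengths C'(1) by blast
  have "(h u mod k + 1) mod k = (h w mod k + r j) mod k"
    by (metis C'(2) j(2) mod_add_left_eq mod_add_right_eq)
  then have "residue_graph k r s (h w mod k) (h u mod k)" using j(1) by (auto simp: residue_graph_def)
  then show False using proper same \<open>k > 0\<close> by auto
qed

theorem theorem1:
  fixes k s :: nat and r :: "nat \<Rightarrow> nat"
    and V :: "'a set" and A :: "('a \<times> 'a) set"
  assumes "k \<ge> 2" and "s \<ge> 1"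
    and "\<forall>i \<in> {1..s}. r i \<le> k \<and> r i \<noteq> 1"
    and "digraph V A" and "strongly_connected V A"
    and "\<forall>C. is_dicycle A C \<longrightarrow> (\<exists>i \<in> {1..s}. length C mod k = r i mod k)"
  shows "dichromatic_number V A \<le> 2 * s + 1"
proof -
  obtain h where h: "cycle_descent A V h"
    using levelling_exists[of V V A] assms(4) by (auto simp: digraph_def)
  obtain g where g: "\<forall>a\<in>{..<k}. g a < Suc (2 * s)"
      "\<forall>a\<in>{..<k}. \<forall>b\<in>{..<k}. residue_graph k r s a b \<longrightarrow> g a \<noteq> g b"
    using greedy_colouring[of "{..<k}" "residue_graph k r s" "2 * s"]
      residue_graph_degree[of k] residue_graph_irrefl[OF assms(1,3)] assms(1,3) by fastforce
  have proper: "\<forall>a<k. \<forall>b<k. residue_graph k r s a b \<longrightarrow> g a \<noteq> g b"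
    using g(2) by simp
  have "(\<lambda>v. g (h v mod k)) ` V \<subseteq> {..<2 * s + 1}" using g(1) assms(1) by auto
  moreover have "\<forall>c. acyclic_set A {v \<in> V. g (h v mod k) = c}"
    using acyclic_residue_colour_class[OF h assms(6) proper] assms(1) by simp
  ultimately show ?thesis unfolding dichromatic_number_def by (intro Least_le) blast
qed

end
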